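(* Let $p$ be an odd prime, $r,m$ positive integers and $s\in\{0,1,\dots,mp^{r-1}-1\}$. Then $$\binom{mp^r}{sp}\equiv\binom{mp^{r-1}}{s}\pmod{p^{2r}}.$$ *)

theory Defs
  imports "HOL-Number_Theory.Number_Theory"
begin

end

theory Submission
  imports Defs
begin

text \<open>
  Let \<open>n = m p^(r-1)\<close>, \<open>k = n - s\<close>, and let \<open>A\<close> and \<open>B\<close> be the products of \<open>j + kp\<close> and of \<open>j\<close>
  over the \<open>j \<in> {1..sp}\<close> prime to \<open>p\<close>. Removing the multiples of \<open>p\<close> from
  \<open>(sp)! * C(np, sp) = \<Prod>j\<in>{1..sp}. kp + j\<close> and from \<open>(sp)! = \<Prod>j\<in>{1..sp}. j\<close> leaves
  \<open>C(np, sp) * B = C(n, s) * A\<close>. Pairing \<open>j\<close> with \<open>sp - j\<close> gives \<open>A^2 \<equiv> B^2\<close> modulo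
  \<open>kp (sp + kp) = k n p^2\<close>, and \<open>k C(n, s) = n C(n - 1, s)\<close>, so \<open>(np)^2\<close>, and with it \<open>p^(2r)\<close>,
  divides \<open>C(n, s) (A^2 - B^2) = (C(np, sp) - C(n, s)) B (A + B)\<close>. Both \<open>B\<close> and, as \<open>p\<close> is odd,
  \<open>A + B \<equiv> 2B\<close> are prime to \<open>p\<close>.
\<close>

definition non_multiples :: "nat \<Rightarrow> nat \<Rightarrow> nat set" where
  "non_multiples p N = {j \<in> {1..N}. \<not> p dvd j}"

lemma finite_non_multiples [simp]: "finite (non_multiples p N)"
  by (simp add: non_multiples_def)

lemma fact_mult_binomial_add:
  "fact k * ((c + k) choose k) = (\<Prod>j\<in>{1..k}. c + j)"
proof -
  have "fact k * fact c * ((c + k) choose k) = (fact (c + k) :: nat)"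
    using binomial_fact_lemma[of k "c + k"] by simp
  also have "\<dots> = fact c * \<Prod>{Suc c..c + k}"
    by (simp add: fact_eq_fact_times)
  also have "\<Prod>{Suc c..c + k} = (\<Prod>j\<in>{1..k}. c + j)"
    using prod.shift_bounds_cl_nat_ivl[of id 1 c k] by (simp add: add.commute)
  finally show ?thesis
    by (simp add: ac_simps)
qed

lemma prod_split_multiples:
  fixes g :: "nat \<Rightarrow> 'a::comm_monoid_mult"
  assumes "p > 0"
  shows "(\<Prod>j\<in>{1..s * p}. g j) = (\<Prod>t\<in>{1..s}. g (t * p)) * (\<Prod>j\<in>non_multiples p (s * p). g j)"
proof -
  have multiples: "{1..s * p} \<inter> {j. p dvd j} = (\<lambda>t. t * p) ` {1..s}"
  proof (intro equalityI subsetI)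
    fix j assume "j \<in> {1..s * p} \<inter> {j. p dvd j}"
    then obtain t where "j = t * p" "1 \<le> t * p" "t * p \<le> s * p"
      by (auto elim!: dvdE simp: mult.commute)
    then show "j \<in> (\<lambda>t. t * p) ` {1..s}"
      using assms by (auto simp: mult_le_cancel2)
  qed (use assms in auto)
  have "inj_on (\<lambda>t. t * p) {1..s}"
    using assms by (auto simp: inj_on_def)
  then have "(\<Prod>j\<in>{1..s * p} \<inter> {j. p dvd j}. g j) = (\<Prod>t\<in>{1..s}. g (t * p))"
    unfolding multiples by (simp add: prod.reindex)
  moreover have "{1..s * p} - {j. p dvd j} = non_multiples p (s * p)"
    by (auto simp: non_multiples_def)
  ultimately show ?thesis
    using prod.Int_Diff[of "{1..s * p}" g "{j. p dvd j}"] by simp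
qed

lemma prod_shifted_block:
  fixes p s c :: nat
  assumes "p > 0"
  shows "(\<Prod>j\<in>{1..s * p}. c * p + j)
           = p ^ s * fact s * ((c + s) choose s) * (\<Prod>j\<in>non_multiples p (s * p). j + c * p)"
proof -
  have "(\<Prod>t\<in>{1..s}. c * p + t * p) = (\<Prod>t\<in>{1..s}. p * (c + t))"
    by (simp add: algebra_simps)
  also have "\<dots> = p ^ s * (fact s * ((c + s) choose s))"
    by (simp add: prod.distrib fact_mult_binomial_add)
  finally show ?thesis
    using prod_split_multiples[OF assms, of "\<lambda>j. c * p + j" s] by (simp add: ac_simps)
qed

lemma binomial_mult_prod_non_multiples:
  fixes p s k :: nat
  assumes "p > 0"
  shows "((s + k) * p choose (s * p)) * (\<Prod>j\<in>non_multiples p (s * p). j)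
           = ((s + k) choose s) * (\<Prod>j\<in>non_multiples p (s * p). j + k * p)"
proof -
  have "fact (s * p) * ((s + k) * p choose (s * p)) = (\<Prod>j\<in>{1..s * p}. k * p + j)"
    using fact_mult_binomial_add[of "s * p" "k * p"] by (simp add: algebra_simps)
  also have "\<dots> = p ^ s * fact s * (((s + k) choose s) * (\<Prod>j\<in>non_multiples p (s * p). j + k * p))"
    by (subst prod_shifted_block[OF assms]) (simp add: add.commute)
  finally have "fact (s * p) * ((s + k) * p choose (s * p))
      = p ^ s * fact s * (((s + k) choose s) * (\<Prod>j\<in>non_multiples p (s * p). j + k * p))" .
  moreover have "fact (s * p) = p ^ s * fact s * (\<Prod>j\<in>non_multiples p (s * p). j)"
    using fact_mult_binomial_add[of "s * p" 0] prod_shifted_block[OF assms, of 0 s] by simp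
  ultimately show ?thesis
    using assms by (simp add: ac_simps)
qed

lemma prod_non_multiples_reflect:
  assumes "p dvd N"
  shows "(\<Prod>j\<in>non_multiples p N. f (N - j)) = (\<Prod>j\<in>non_multiples p N. f j)"
proof -
  have "N - j \<in> non_multiples p N" if "j \<in> non_multiples p N" for j
  proof -
    have j: "1 \<le> j" "j \<le> N" "\<not> p dvd j"
      using that by (auto simp: non_multiples_def)
    have "\<not> p dvd N - j"
      using assms j by (metis diff_diff_cancel dvd_diff_nat)
    moreover from this have "j \<noteq> N"
      using assms by auto
    ultimately show ?thesis
      using j by (auto simp: non_multiples_def)
  qed
  then show ?thesis
    by (intro prod.reindex_bij_witness[of _ "\<lambda>j. N - j" "\<lambda>j. N - j"])
       (auto simp: non_multiples_def)
qed

lemma prod_non_multiples_shift_square_cong: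
  assumes "p dvd N"
  shows "[(\<Prod>j\<in>non_multiples p N. j + c) ^ 2 = (\<Prod>j\<in>non_multiples p N. j) ^ 2] (mod c * (N + c))"
proof -
  let ?Q = "non_multiples p N"
  have "(\<Prod>j\<in>?Q. j + c) ^ 2 = (\<Prod>j\<in>?Q. (j + c) * (N - j + c))"
    by (simp add: power2_eq_square prod.distrib prod_non_multiples_reflect[OF assms, of "\<lambda>j. j + c"])
  also have "\<dots> = (\<Prod>j\<in>?Q. j * (N - j) + c * (N + c))"
  proof (rule prod.cong[OF refl])
    fix j assume "j \<in> ?Q"
    then obtain i where "N = j + i"
      by (auto simp: non_multiples_def dest: le_Suc_ex)
    then show "(j + c) * (N - j + c) = j * (N - j) + c * (N + c)"
      by (simp add: algebra_simps)
  qed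
  also have "[\<dots> = (\<Prod>j\<in>?Q. j * (N - j))] (mod c * (N + c))"
    by (rule cong_prod) (simp add: cong_def)
  also have "(\<Prod>j\<in>?Q. j * (N - j)) = (\<Prod>j\<in>?Q. j) ^ 2"
    using prod_non_multiples_reflect[OF assms, of "\<lambda>j. j"]
    by (simp add: power2_eq_square prod.distrib)
  finally show ?thesis .
qed

lemma binomial_mult_prod_non_multiples_square_cong:
  fixes p s n :: nat
  assumes "s \<le> n"
  shows "[(n choose s) * (\<Prod>j\<in>non_multiples p (s * p). j + (n - s) * p) ^ 2
          = (n choose s) * (\<Prod>j\<in>non_multiples p (s * p). j) ^ 2] (mod (n * p) ^ 2)"
proof -
  define k where "k = n - s"
  have modulus: "k * p * (s * p + k * p) = k * n * p ^ 2"
    using assms by (simp add: k_def power2_eq_square algebra_simps)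
  have "[(\<Prod>j\<in>non_multiples p (s * p). j + k * p) ^ 2 = (\<Prod>j\<in>non_multiples p (s * p). j) ^ 2]
      (mod k * n * p ^ 2)"
    using prod_non_multiples_shift_square_cong[of p "s * p" "k * p", unfolded modulus] by simp
  then have "[(n choose s) * (\<Prod>j\<in>non_multiples p (s * p). j + k * p) ^ 2
      = (n choose s) * (\<Prod>j\<in>non_multiples p (s * p). j) ^ 2] (mod (n choose s) * (k * n * p ^ 2))"
    unfolding cong_def by (simp only: mult_mod_right [symmetric])
  moreover have "(n choose s) * (k * n * p ^ 2) = (n * p) ^ 2 * ((n - 1) choose s)"
    using binomial_absorb_comp[of n s] by (simp add: k_def power2_eq_square ac_simps)
  ultimately show ?thesis
    unfolding k_def by (metis cong_dvd_modulus_nat dvd_triv_left)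
qed

lemma odd_prime_not_dvd_add:
  fixes p a b :: nat
  assumes "prime p" "odd p" "[a = b] (mod p)" "\<not> p dvd b"
  shows "\<not> p dvd a + b"
proof
  assume "p dvd a + b"
  moreover have "[a + b = 2 * b] (mod p)"
    using assms(3) by (simp add: mult_2 cong_add_rcancel_nat)
  ultimately have "p dvd 2 * b"
    using cong_dvd_iff by blast
  with assms(1,4) have "p dvd 2"
    using prime_dvd_mult_iff by blast
  then have "p \<le> 2"
    by (simp add: dvd_imp_le)
  with assms(1,2) show False
    using prime_ge_2_nat[of p] by simp
qed

lemma binomial_mult_prime_cong:
  fixes p e n s :: nat
  assumes "prime p" "odd p" "p ^ e dvd n"
  shows "[(n * p) choose (s * p) = n choose s] (mod p ^ (2 * (e + 1)))"
proof (cases "s \<le> n")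
  case False
  with assms(1) show ?thesis
    by (simp add: binomial_eq_0 prime_gt_0_nat)
next
  case True
  define M where "M = p ^ (2 * (e + 1))"
  let ?Q = "non_multiples p (s * p)"
  define A where "A = (\<Prod>j\<in>?Q. j + (n - s) * p)"
  define B where "B = (\<Prod>j\<in>?Q. j)"
  have ident: "(n * p choose (s * p)) * B = (n choose s) * A"
    using binomial_mult_prod_non_multiples[of p s "n - s"] assms(1) True
    by (simp add: A_def B_def prime_gt_0_nat)
  have "M dvd (n * p) ^ 2"
  proof -
    have "p ^ (e + 1) dvd n * p"
      using assms(3) by (simp add: mult_dvd_mono)
    then show ?thesis
      unfolding M_def by (metis dvd_power_same mult.commute power_mult)
  qed
  then have square: "[(n choose s) * A ^ 2 = (n choose s) * B ^ 2] (mod M)"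
    unfolding A_def B_def
    by (rule cong_dvd_modulus_nat[OF binomial_mult_prod_non_multiples_square_cong[OF True]])
  have "\<not> p dvd B"
    using assms(1) by (simp add: B_def prime_dvd_prod_iff non_multiples_def)
  moreover have "[A = B] (mod p)"
    unfolding A_def B_def by (rule cong_prod) (simp add: cong_def)
  ultimately have "coprime p (B * (A + B))"
    using assms(1,2) by (simp add: prime_imp_coprime odd_prime_not_dvd_add)
  then have "coprime (B * (A + B)) M"
    unfolding M_def by (simp add: coprime_commute)
  moreover have "[(n * p choose (s * p)) * (B * (A + B)) = (n choose s) * (B * (A + B))] (mod M)"
  proof -
    have "(n * p choose (s * p)) * (B * (A + B)) = (n choose s) * A ^ 2 + (n choose s) * A * B"
      using ident by (simp add: algebra_simps power2_eq_square)
    also have "[\<dots> = (n choose s) * B ^ 2 + (n choose s) * A * B] (mod M)"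
      using square by (rule cong_add) simp
    also have "(n choose s) * B ^ 2 + (n choose s) * A * B = (n choose s) * (B * (A + B))"
      by (simp add: algebra_simps power2_eq_square)
    finally show ?thesis .
  qed
  ultimately show ?thesis
    by (simp add: M_def cong_mult_rcancel_nat)
qed

theorem lemma2p10:
  fixes p r m s :: nat
  assumes "prime p" and "odd p" and "r \<ge> 1" and "m \<ge> 1"
    and "s < m * p ^ (r - 1)"
  shows "[(m * p ^ r) choose (s * p) = (m * p ^ (r - 1)) choose s] (mod p ^ (2 * r))"
proof -
  obtain e where r: "r = e + 1"
    using assms(3) by (metis le_add_diff_inverse2)
  have "[m * p ^ e * p choose (s * p) = m * p ^ e choose s] (mod p ^ (2 * (e + 1)))"
    by (rule binomial_mult_prime_cong[OF assms(1,2)]) simp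
  then show ?thesis
    by (simp only: r add_diff_cancel_right' power_add power_one_right mult.assoc)
qed

end
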